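(* Consider the system, with state $(s,e,v,q,c)$ in $\Omega=\{(s,e,v,q,c)\in\mathbb{R}_+^5: q\ge q_{\min}\}$, $$\dot s=-\tfrac1\gamma\varphi(s)e+d(s_{\rm in}-s),\quad \dot e=(1-\alpha)\varphi(s)e-de,\quad \dot v=\alpha\beta\varphi(s)e-\rho(v)c-dv,$$ $$\dot q=\rho(v)-\mu(q)q,\quad \dot c=\mu(q)c-dc,$$ with constant controls $\alpha\in(0,1)$ and $d>0$. Then the system has an equilibrium in $\Omega$ with $e>0$ and $c>0$ if and only if $d<\min\{(1-\alpha)\varphi_{\max},\psi_{\max}\}$ and $$\varphi^{-1}\!\left(\frac{d}{1-\alpha}\right)+\frac{\psi^{-1}(d)}{\alpha\beta\gamma}<s_{\rm in}.$$ In that case this equilibrium is unique and equals $(s^*,e^*,v^*,q^*,c^* )$ with $s^*=\varphi^{-1}(d/(1-\alpha))$, $e^*=(1-\alpha)\gamma(s_{\rm in}-s^* )$, $v^*=\psi^{-1}(d)$, $q^*=\mu^{-1}(d)$, $c^*=(v_{\rm in}^*-v^* )/q^*$ where $v_{\rm in}^*=\alpha\beta\gamma(s_{\rm in}-s^* )$.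
   Context: All parameters $s_{\rm in},\gamma,\beta,\varphi_{\max},k_s,\rho_{\max},k_v,q_{\min},\mu_{\max}$ are strictly positive. $\varphi(s)=\frac{\varphi_{\max}s}{k_s+s}$, $\rho(v)=\frac{\rho_{\max}v}{k_v+v}$ on $[0,\infty)$, $\mu(q)=\mu_{\max}(1-q_{\min}/q)$ on $[q_{\min},\infty)$. Inverses $\varphi^{-1}:[0,\varphi_{\max})\to[0,\infty)$, $\mu^{-1}:[0,\mu_{\max})\to[q_{\min},\infty)$, $\rho^{-1}:[0,\rho_{\max})\to[0,\infty)$. $\psi_{\max}=\frac{\mu_{\max}\rho_{\max}}{\rho_{\max}+q_{\min}\mu_{\max}}$ and $\psi^{-1}(y)=\rho^{-1}(y\,\mu^{-1}(y))$ for $y\in[0,\psi_{\max})$. *)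

theory Defs
  imports Complex_Main
begin

definition phi :: "real \<Rightarrow> real \<Rightarrow> real \<Rightarrow> real" where
  "phi phimax ks s = phimax * s / (ks + s)"

definition rho :: "real \<Rightarrow> real \<Rightarrow> real \<Rightarrow> real" where
  "rho rhomax kv v = rhomax * v / (kv + v)"

definition mu :: "real \<Rightarrow> real \<Rightarrow> real \<Rightarrow> real" where
  "mu mumax qmin q = mumax * (1 - qmin / q)"

definition phi_inv :: "real \<Rightarrow> real \<Rightarrow> real \<Rightarrow> real" where
  "phi_inv phimax ks = the_inv_into {0..} (phi phimax ks)"

definition rho_inv :: "real \<Rightarrow> real \<Rightarrow> real \<Rightarrow> real" where
  "rho_inv rhomax kv = the_inv_into {0..} (rho rhomax kv)"

definition mu_inv :: "real \<Rightarrow> real \<Rightarrow> real \<Rightarrow> real" where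
  "mu_inv mumax qmin = the_inv_into {qmin..} (mu mumax qmin)"

definition psi_max :: "real \<Rightarrow> real \<Rightarrow> real \<Rightarrow> real" where
  "psi_max mumax rhomax qmin = mumax * rhomax / (rhomax + qmin * mumax)"

definition psi_inv :: "real \<Rightarrow> real \<Rightarrow> real \<Rightarrow> real \<Rightarrow> real \<Rightarrow> real" where
  "psi_inv rhomax kv mumax qmin y = rho_inv rhomax kv (y * mu_inv mumax qmin y)"

definition is_equilibrium :: "real \<Rightarrow> real \<Rightarrow> real \<Rightarrow> real \<Rightarrow> real \<Rightarrow> real \<Rightarrow> real \<Rightarrow> real \<Rightarrow> real \<Rightarrow> real \<Rightarrow> real \<Rightarrow> real \<Rightarrow> real \<Rightarrow> real \<Rightarrow> real \<Rightarrow> real \<Rightarrow> bool" where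
  "is_equilibrium s_in gamma beta phimax ks rhomax kv qmin mumax alpha d s e v q c \<longleftrightarrow>
     s \<ge> 0 \<and> e \<ge> 0 \<and> v \<ge> 0 \<and> q \<ge> 0 \<and> c \<ge> 0 \<and> q \<ge> qmin \<and>
     - (1 / gamma) * phi phimax ks s * e + d * (s_in - s) = 0 \<and>
     (1 - alpha) * phi phimax ks s * e - d * e = 0 \<and>
     alpha * beta * phi phimax ks s * e - rho rhomax kv v * c - d * v = 0 \<and>
     rho rhomax kv v - mu mumax qmin q * q = 0 \<and>
     mu mumax qmin q * c - d * c = 0"

end

theory Submission
  imports Defs
begin

text \<open>At an equilibrium with \<open>e > 0\<close> and \<open>c > 0\<close> the equations for \<open>e\<close> and \<open>c\<close> force
  \<open>\<phi>(s) = d/(1-\<alpha>)\<close> and \<open>\<mu>(q) = d\<close>, and then the equation for \<open>q\<close> gives \<open>\<rho>(v) = d q\<close>.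
  Since \<open>\<phi>\<close>, \<open>\<rho>\<close> and \<open>\<mu>\<close> are bijections onto \<open>[0, \<phi>\<^sub>m\<^sub>a\<^sub>x)\<close>, \<open>[0, \<rho>\<^sub>m\<^sub>a\<^sub>x)\<close>, \<open>[0, \<mu>\<^sub>m\<^sub>a\<^sub>x)\<close>,
  these determine \<open>s\<close>, \<open>q\<close> and \<open>v\<close>, and they are solvable exactly when \<open>d/(1-\<alpha>) < \<phi>\<^sub>m\<^sub>a\<^sub>x\<close>
  and \<open>d \<mu>\<^sup>-\<^sup>1(d) < \<rho>\<^sub>m\<^sub>a\<^sub>x\<close>, the latter being equivalent to \<open>d < \<psi>\<^sub>m\<^sub>a\<^sub>x\<close>. The two remaining
  (linear) equations then give \<open>e\<close> and \<open>c\<close> explicitly, and \<open>c > 0\<close> is the inequality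
  \<open>v < \<alpha>\<beta>\<gamma>(s\<^sub>i\<^sub>n - s)\<close>.\<close>

lemma bij_betw_the_inv_into_iff:
  assumes "bij_betw f A B"
  shows "x \<in> A \<and> f x = y \<longleftrightarrow> y \<in> B \<and> x = the_inv_into A f y"
  using assms bij_betwE bij_betw_imp_inj_on the_inv_into_f_eq
    bij_betw_the_inv_into[OF assms] f_the_inv_into_f_bij_betw
  by metis

lemma bij_betw_phi:
  assumes "a > 0" "k > 0"
  shows "bij_betw (phi a k) {0..} {0..<a}"
proof (rule bij_betwI')
  fix s t :: real assume "s \<in> {0..}" "t \<in> {0..}"
  then show "phi a k s = phi a k t \<longleftrightarrow> s = t"
    using assms by (auto simp: phi_def field_simps)
next
  fix s :: real assume "s \<in> {0..}"
  then show "phi a k s \<in> {0..<a}"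
    using assms by (simp add: phi_def field_simps)
next
  fix y assume "y \<in> {0..<a}"
  then show "\<exists>s\<in>{0..}. y = phi a k s"
    using assms by (intro bexI[of _ "k * y / (a - y)"]) (auto simp: phi_def field_simps)
qed

lemma bij_betw_mu:
  assumes "m > 0" "qm > 0"
  shows "bij_betw (mu m qm) {qm..} {0..<m}"
proof (rule bij_betwI')
  fix q r :: real assume "q \<in> {qm..}" "r \<in> {qm..}"
  then show "mu m qm q = mu m qm r \<longleftrightarrow> q = r"
    using assms by (auto simp: mu_def field_simps)
next
  fix q :: real assume "q \<in> {qm..}"
  then show "mu m qm q \<in> {0..<m}"
    using assms by (simp add: mu_def field_simps)
next
  fix y assume "y \<in> {0..<m}"
  then show "\<exists>q\<in>{qm..}. y = mu m qm q"
    using assms by (intro bexI[of _ "qm * m / (m - y)"]) (auto simp: mu_def field_simps)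
qed

lemma phi_eq_iff:
  assumes "a > 0" "k > 0"
  shows "s \<ge> 0 \<and> phi a k s = y \<longleftrightarrow> 0 \<le> y \<and> y < a \<and> s = phi_inv a k y"
  using bij_betw_the_inv_into_iff[OF bij_betw_phi[OF assms]] by (simp add: phi_inv_def)

lemma rho_eq_iff:
  assumes "a > 0" "k > 0"
  shows "v \<ge> 0 \<and> rho a k v = y \<longleftrightarrow> 0 \<le> y \<and> y < a \<and> v = rho_inv a k y"
proof -
  have "rho = phi"
    by (simp add: rho_def phi_def fun_eq_iff)
  then show ?thesis
    using bij_betw_the_inv_into_iff[OF bij_betw_phi[OF assms]] by (simp add: rho_inv_def)
qed

lemma mu_eq_iff:
  assumes "m > 0" "qm > 0"
  shows "q \<ge> qm \<and> mu m qm q = y \<longleftrightarrow> 0 \<le> y \<and> y < m \<and> q = mu_inv m qm y"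
  using bij_betw_the_inv_into_iff[OF bij_betw_mu[OF assms]] by (simp add: mu_inv_def)

lemma psi_max_less:
  assumes "qmin > 0" "mumax > 0" "rhomax > 0"
  shows "psi_max mumax rhomax qmin < mumax"
  using assms by (simp add: psi_max_def divide_less_eq add_pos_pos algebra_simps)

text \<open>Solving \<open>\<mu>(q) = d\<close> gives \<open>q = \<mu>\<^sub>m\<^sub>a\<^sub>x q\<^sub>m\<^sub>i\<^sub>n / (\<mu>\<^sub>m\<^sub>a\<^sub>x - d)\<close>, and \<open>d q < \<rho>\<^sub>m\<^sub>a\<^sub>x\<close> becomes
  \<open>d (\<rho>\<^sub>m\<^sub>a\<^sub>x + q\<^sub>m\<^sub>i\<^sub>n \<mu>\<^sub>m\<^sub>a\<^sub>x) < \<mu>\<^sub>m\<^sub>a\<^sub>x \<rho>\<^sub>m\<^sub>a\<^sub>x\<close>.\<close>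
lemma mult_less_rhomax_iff_less_psi_max:
  assumes "qmin > 0" "mumax > 0" "rhomax > 0" "q \<ge> qmin" "mu mumax qmin q = d"
  shows "d * q < rhomax \<longleftrightarrow> d < psi_max mumax rhomax qmin"
proof -
  have "q > 0"
    using assms by linarith
  then have q_eq: "q * (mumax - d) = mumax * qmin"
    using assms(5) by (simp add: mu_def field_simps)
  then have "mumax - d > 0"
    using \<open>q > 0\<close> assms(1,2) by (metis mult_pos_pos zero_less_mult_pos)
  then have "d * q < rhomax \<longleftrightarrow> d * (q * (mumax - d)) < rhomax * (mumax - d)"
    by (simp add: mult.assoc[symmetric])
  also have "\<dots> \<longleftrightarrow> d * (rhomax + qmin * mumax) < mumax * rhomax"
    unfolding q_eq by (simp add: algebra_simps)
  also have "\<dots> \<longleftrightarrow> d < psi_max mumax rhomax qmin"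
    using assms(1-3) by (simp add: psi_max_def pos_less_divide_eq add_pos_pos)
  finally show ?thesis .
qed

lemma uptake_storage_eq_iff:
  assumes "qmin > 0" "mumax > 0" "rhomax > 0" "kv > 0" "d \<ge> 0"
  shows "(q \<ge> qmin \<and> mu mumax qmin q = d) \<and> (v \<ge> 0 \<and> rho rhomax kv v = d * q) \<longleftrightarrow>
    d < psi_max mumax rhomax qmin \<and> q = mu_inv mumax qmin d \<and> v = psi_inv rhomax kv mumax qmin d"
proof -
  note mu_iff = mu_eq_iff[OF assms(2,1)] and rho_iff = rho_eq_iff[OF assms(3,4)]
    and psi_iff = mult_less_rhomax_iff_less_psi_max[OF assms(1-3)]
  show ?thesis
  proof
    assume eqs: "(q \<ge> qmin \<and> mu mumax qmin q = d) \<and> (v \<ge> 0 \<and> rho rhomax kv v = d * q)"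
    then have "q = mu_inv mumax qmin d"
      using mu_iff by blast
    moreover have "d * q < rhomax" "v = rho_inv rhomax kv (d * q)"
      using eqs rho_iff by blast+
    ultimately show "d < psi_max mumax rhomax qmin \<and> q = mu_inv mumax qmin d \<and>
        v = psi_inv rhomax kv mumax qmin d"
      using eqs psi_iff by (simp add: psi_inv_def)
  next
    assume sol: "d < psi_max mumax rhomax qmin \<and> q = mu_inv mumax qmin d \<and>
        v = psi_inv rhomax kv mumax qmin d"
    then have "d < mumax"
      using psi_max_less[OF assms(1-3)] by linarith
    then have "q \<ge> qmin \<and> mu mumax qmin q = d"
      using mu_iff sol assms(5) by blast
    moreover have "0 \<le> d * q \<and> d * q < rhomax"
      using calculation sol psi_iff assms(1,5) by auto
    ultimately show "(q \<ge> qmin \<and> mu mumax qmin q = d) \<and> (v \<ge> 0 \<and> rho rhomax kv v = d * q)"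
      using rho_iff sol by (simp add: psi_inv_def)
  qed
qed

lemma is_equilibrium_pos_iff:
  fixes s_in s :: real
  assumes "gamma > 0" "beta > 0" "0 < alpha" "alpha < 1" "d > 0" "qmin > 0"
  defines "vin \<equiv> alpha * beta * gamma * (s_in - s)"
  shows "is_equilibrium s_in gamma beta phimax ks rhomax kv qmin mumax alpha d s e v q c
      \<and> e > 0 \<and> c > 0 \<longleftrightarrow>
    (s \<ge> 0 \<and> phi phimax ks s = d / (1 - alpha)) \<and>
    ((q \<ge> qmin \<and> mu mumax qmin q = d) \<and> (v \<ge> 0 \<and> rho rhomax kv v = d * q)) \<and>
    v < vin \<and> e = (1 - alpha) * gamma * (s_in - s) \<and> c = (vin - v) / q"
  (is "?equilibrium \<longleftrightarrow> ?solution")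
proof
  assume ?equilibrium
  then obtain "s \<ge> 0" "v \<ge> 0" "q \<ge> qmin" "e > 0" "c > 0"
    and eq_s: "- (1 / gamma) * phi phimax ks s * e + d * (s_in - s) = 0"
    and eq_e: "(1 - alpha) * phi phimax ks s * e - d * e = 0"
    and eq_v: "alpha * beta * phi phimax ks s * e - rho rhomax kv v * c - d * v = 0"
    and eq_q: "rho rhomax kv v - mu mumax qmin q * q = 0"
    and eq_c: "mu mumax qmin q * c - d * c = 0"
    unfolding is_equilibrium_def by blast
  have "q > 0"
    using \<open>q \<ge> qmin\<close> assms(6) by linarith
  have "((1 - alpha) * phi phimax ks s - d) * e = 0"
    using eq_e by (simp only: left_diff_distrib)
  then have "(1 - alpha) * phi phimax ks s = d"
    using \<open>e > 0\<close> by simp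
  then have phi_s: "phi phimax ks s = d / (1 - alpha)"
    using assms(4) by (simp add: field_simps)
  have "(mu mumax qmin q - d) * c = 0"
    using eq_c by (simp only: left_diff_distrib)
  then have mu_q: "mu mumax qmin q = d"
    using \<open>c > 0\<close> by simp
  then have rho_v: "rho rhomax kv v = d * q"
    using eq_q by simp
  have phi_e: "phi phimax ks s * e = gamma * d * (s_in - s)"
    using eq_s assms(1) by (simp add: field_simps)
  then have "d * e = d * ((1 - alpha) * gamma * (s_in - s))"
    using phi_s assms(4) by (simp add: field_simps)
  then have "e = (1 - alpha) * gamma * (s_in - s)"
    using assms(5) by simp
  moreover have "alpha * beta * (phi phimax ks s * e) = rho rhomax kv v * c + d * v"
    using eq_v by (simp add: algebra_simps)
  then have "d * vin = d * (q * c + v)"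
    unfolding phi_e rho_v vin_def by (simp add: algebra_simps)
  then have "vin = q * c + v"
    using assms(5) by simp
  ultimately show ?solution
    using \<open>s \<ge> 0\<close> \<open>v \<ge> 0\<close> \<open>q \<ge> qmin\<close> \<open>c > 0\<close> \<open>q > 0\<close> phi_s mu_q rho_v
    by (simp add: field_simps)
next
  assume ?solution
  then obtain "s \<ge> 0" "v \<ge> 0" "q \<ge> qmin" "v < vin"
    and phi_s: "phi phimax ks s = d / (1 - alpha)"
    and mu_q: "mu mumax qmin q = d" and rho_v: "rho rhomax kv v = d * q"
    and e_eq: "e = (1 - alpha) * gamma * (s_in - s)" and c_eq: "c = (vin - v) / q"
    by blast
  have "q > 0"
    using \<open>q \<ge> qmin\<close> assms(6) by linarith
  have "0 < alpha * beta * gamma * (s_in - s)"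
    using \<open>v \<ge> 0\<close> \<open>v < vin\<close> unfolding vin_def by linarith
  moreover have "alpha * beta * gamma > 0"
    using assms(1-3) by simp
  ultimately have "s < s_in"
    by (simp add: zero_less_mult_iff)
  then have "e > 0"
    using e_eq assms(1,4) by simp
  have "c > 0"
    using c_eq \<open>v < vin\<close> \<open>q > 0\<close> by simp
  have phi_e: "phi phimax ks s * e = gamma * d * (s_in - s)"
    unfolding phi_s e_eq using assms(4) by simp
  have "d * vin = d * (q * c + v)"
    using c_eq \<open>q > 0\<close> by simp
  then have "alpha * beta * (phi phimax ks s * e) = rho rhomax kv v * c + d * v"
    unfolding phi_e rho_v vin_def by (simp add: algebra_simps)
  then have eq_v: "alpha * beta * phi phimax ks s * e - rho rhomax kv v * c - d * v = 0"
    by (simp add: mult.assoc)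
  have eq_s: "- (1 / gamma) * phi phimax ks s * e + d * (s_in - s) = 0"
    using assms(1) by (simp add: mult.assoc phi_e)
  have eq_e: "(1 - alpha) * phi phimax ks s * e - d * e = 0"
    using assms(4) by (simp add: phi_s)
  show ?equilibrium
    unfolding is_equilibrium_def
    using \<open>s \<ge> 0\<close> \<open>v \<ge> 0\<close> \<open>q \<ge> qmin\<close> \<open>q > 0\<close> \<open>e > 0\<close> \<open>c > 0\<close>
      eq_s eq_e eq_v mu_q rho_v by simp
qed

theorem mainTheorem2:
  fixes s_in gamma beta phimax ks rhomax kv qmin mumax alpha d :: real
  assumes "s_in > 0" "gamma > 0" "beta > 0" "phimax > 0" "ks > 0" "rhomax > 0" "kv > 0"
    "qmin > 0" "mumax > 0" "0 < alpha" "alpha < 1" "d > 0"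
  defines "sstar \<equiv> phi_inv phimax ks (d / (1 - alpha))"
  defines "estar \<equiv> (1 - alpha) * gamma * (s_in - sstar)"
  defines "vstar \<equiv> psi_inv rhomax kv mumax qmin d"
  defines "qstar \<equiv> mu_inv mumax qmin d"
  defines "vinstar \<equiv> alpha * beta * gamma * (s_in - sstar)"
  defines "cstar \<equiv> (vinstar - vstar) / qstar"
  defines "cond \<equiv> d < min ((1 - alpha) * phimax) (psi_max mumax rhomax qmin) \<and>
      phi_inv phimax ks (d / (1 - alpha)) + psi_inv rhomax kv mumax qmin d / (alpha * beta * gamma) < s_in"
  shows "((\<exists>s e v q c. is_equilibrium s_in gamma beta phimax ks rhomax kv qmin mumax alpha d s e v q c
             \<and> e > 0 \<and> c > 0) \<longleftrightarrow> cond)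
         \<and> (cond \<longrightarrow> (\<forall>s e v q c. (is_equilibrium s_in gamma beta phimax ks rhomax kv qmin mumax alpha d s e v q c
             \<and> e > 0 \<and> c > 0) \<longleftrightarrow> (s, e, v, q, c) = (sstar, estar, vstar, qstar, cstar)))"
proof -
  have "alpha * beta * gamma > 0"
    using assms by simp
  then have "sstar + vstar / (alpha * beta * gamma) < s_in \<longleftrightarrow> vstar < vinstar"
    unfolding vinstar_def
    by (metis add.commute less_diff_eq mult.commute pos_divide_less_eq)
  then have cond_iff: "cond \<longleftrightarrow> d / (1 - alpha) < phimax \<and> d < psi_max mumax rhomax qmin \<and>
      vstar < vinstar"
    using assms(11) unfolding cond_def vstar_def sstar_def
    by (auto simp: pos_divide_less_eq mult.commute)
  have "is_equilibrium s_in gamma beta phimax ks rhomax kv qmin mumax alpha d s e v q c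
      \<and> e > 0 \<and> c > 0 \<longleftrightarrow> cond \<and> (s, e, v, q, c) = (sstar, estar, vstar, qstar, cstar)"
    for s e v q c
    unfolding is_equilibrium_pos_iff[OF assms(2,3,10-12,8)]
      uptake_storage_eq_iff[OF assms(8,9,6,7) less_imp_le[OF assms(12)]]
      phi_eq_iff[OF assms(4,5)] cond_iff
    using assms(11,12) unfolding sstar_def estar_def vstar_def qstar_def vinstar_def cstar_def
    by auto
  then show ?thesis
    by blast
qed

end
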